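(* Let $D_N=\sum_{k=0}^{N}\binom{N}{k}^2 2^k$ denote the $N$-th central Delannoy number. For every non-negative integer $n$, $$v_3(D_{2n+1})=1+v_3(2n+1)+v_3\Big(\binom{2n}{n}\Big),\qquad v_3(D_{2n})=v_3\Big(\binom{2n}{n}\Big).$$
   Context: $v_3(y)$ denotes the $3$-adic valuation of a nonzero integer $y$. Equivalently, $D_N$ is the number of lattice paths from $(0,0)$ to $(N,N)$ using steps $(1,0)$, $(0,1)$, $(1,1)$. *)

theory Defs
  imports "HOL-Computational_Algebra.Primes"
begin

definition delannoy :: "nat \<Rightarrow> nat" where
  "delannoy N = (\<Sum>k = 0..N. (N choose k)^2 * 2^k)"

abbreviation v3 :: "nat \<Rightarrow> nat" where
  "v3 y \<equiv> multiplicity (3::nat) y"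

end

theory Submission
  imports Defs "HOL-Computational_Algebra.Polynomial"
begin

(*
  Since (1 + x)(2 + x) = 3x + (x^2 + 2), D_N is the coefficient of x^N in (3x + (x^2 + 2))^N,
  so D_N = sum_k T(N,k) with T(N,k) = C(N,2k) C(2k,k) 3^(N-2k) 2^k.  Write N = 2m + r, r <= 1.
  The middle term T(N,m) has the valuation claimed for D_N, and it is strictly dominant: for
  k = m - j with j >= 1, both T(N,k) c_j 2^j and T(N,m) C(m,k)^2 9^j equal
  N!/(k! j!)^2 3^(N-2k) 2^m, where c_j = (2j+r)!/(j!)^2 < 9^j; hence v_3(T(N,k)) > v_3(T(N,m)).
*)

lemma multiplicity_sum_eq_dominant:
  fixes f :: "'b \<Rightarrow> 'a :: factorial_semiring_multiplicative"
  assumes "finite A" "a \<in> A" "f a \<noteq> 0"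
    and "\<And>k. k \<in> A - {a} \<Longrightarrow> p ^ Suc (multiplicity p (f a)) dvd f k"
  shows "multiplicity p (sum f A) = multiplicity p (f a)"
proof (cases "is_unit p")
  case False
  define rest where "rest = sum f (A - {a})"
  have split: "sum f A = f a + rest"
    using assms(1,2) by (simp add: rest_def sum.remove)
  have "p ^ Suc (multiplicity p (f a)) dvd rest"
    unfolding rest_def using assms(4) by (intro dvd_sum) auto
  then have "multiplicity p (f a) < multiplicity p rest" if "rest \<noteq> 0"
    using that False by (intro Suc_le_lessD multiplicity_geI)
  then show ?thesis
    unfolding split using assms(3) multiplicity_sum_lt by (cases "rest = 0") auto
qed (simp add: multiplicity_unit_left)

lemma prime_elem_multiplicity_less_of_mult_eq:
  fixes p :: "'a :: factorial_semiring"
  assumes "prime_elem p" "x * c = y * z * p ^ d" "y \<noteq> 0" "z \<noteq> 0"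
    and "multiplicity p c < d"
  shows "multiplicity p y < multiplicity p x"
proof -
  have "p \<noteq> 0"
    using assms(1) by (rule prime_elem_not_zeroI)
  with assms(2-4) have "x \<noteq> 0" "c \<noteq> 0"
    by auto
  with assms(1-4) \<open>p \<noteq> 0\<close>
  have "multiplicity p x + multiplicity p c = multiplicity p y + multiplicity p z + d"
    by (metis prime_elem_multiplicity_mult_distrib multiplicity_prime_power power_not_zero
        mult_eq_0_iff)
  with assms(5) show ?thesis
    by linarith
qed

lemma multiplicity_less_of_less_power:
  fixes p x :: nat
  assumes "0 < x" "x < p ^ d"
  shows "multiplicity p x < d"
  using assms by (intro multiplicity_lessI) (auto dest: dvd_imp_le)

lemma coeff_power_monom2_plus_const:
  fixes c :: "'a :: comm_semiring_1"
  shows "coeff ((monom 1 2 + [:c:]) ^ j) i =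
           (if even i then of_nat (j choose (i div 2)) * c ^ (j - i div 2) else 0)"
proof -
  have "coeff ((monom 1 2 + [:c:]) ^ j) i =
          (\<Sum>k\<le>j. of_nat (j choose k) * (if 2 * k = i then c ^ (j - k) else 0))"
    by (simp add: binomial_ring coeff_sum monom_power poly_const_pow mult_monom of_nat_poly
        flip: monom_0 smult_monom)
  also have "\<dots> = (if even i then of_nat (j choose (i div 2)) * c ^ (j - i div 2) else 0)"
  proof (cases "even i \<and> i div 2 \<le> j")
    case True
    then have "(\<Sum>k\<le>j. of_nat (j choose k) * (if 2 * k = i then c ^ (j - k) else 0)) =
               (\<Sum>k\<in>{i div 2}. of_nat (j choose k) * c ^ (j - k))"
      by (intro sum.mono_neutral_cong_right) auto
    with True show ?thesis by simp
  qed (auto simp: binomial_eq_0 intro!: sum.neutral)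
  finally show ?thesis .
qed

lemma odd_times_pow4_less_pow9: "2 \<le> j \<Longrightarrow> (2 * j + 1) * 4 ^ j < (9::nat) ^ j"
proof (induction j rule: dec_induct)
  case (step j)
  have "(2 * Suc j + 1) * 4 ^ Suc j \<le> 9 * ((2 * j + 1) * 4 ^ j)"
    using step.hyps by simp
  also have "\<dots> < 9 ^ Suc j"
    using step.IH by simp
  finally show ?case .
qed simp

lemma odd_times_central_binomial_less:
  assumes "1 \<le> j"
  shows "(2 * j + 1) * (2 * j choose j) < 9 ^ j"
proof (cases "j = 1")
  case False
  have "(2 * j + 1) * (2 * j choose j) \<le> (2 * j + 1) * 4 ^ j"
    using binomial_le_pow2[of "2 * j" j] by (intro mult_left_mono) (simp_all add: power_mult)
  also have "\<dots> < 9 ^ j"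
    using assms False by (intro odd_times_pow4_less_pow9) simp
  finally show ?thesis .
qed simp

lemma central_binomial_less:
  assumes "1 \<le> j"
  shows "2 * j choose j < 9 ^ j"
proof -
  have "2 * j choose j \<le> 4 ^ j"
    using binomial_le_pow2[of "2 * j" j] by (simp add: power_mult)
  also have "\<dots> < 9 ^ j"
    using assms by (intro power_strict_mono) simp_all
  finally show ?thesis .
qed

lemma delannoy_eq_coeff_power: "delannoy n = coeff (([:1, 1:] * [:2, 1:]) ^ n) n"
proof -
  have "coeff (([:1, 1:] * [:2, 1:]) ^ n) n =
          (\<Sum>k\<le>n. (n choose k) * ((n choose (n - k)) * 2 ^ k))"
    unfolding power_mult_distrib coeff_mult
    by (intro sum.cong) (simp_all add: coeff_linear_poly_power)
  also have "\<dots> = delannoy n"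
    unfolding delannoy_def atLeast0AtMost
    by (intro sum.cong) (simp_all add: binomial_symmetric[symmetric] power2_eq_square)
  finally show ?thesis ..
qed

definition delannoy_term :: "nat \<Rightarrow> nat \<Rightarrow> nat" where
  "delannoy_term n k = (n choose (2 * k)) * ((2 * k) choose k) * 3 ^ (n - 2 * k) * 2 ^ k"

lemma delannoy_eq_sum_delannoy_term: "delannoy n = (\<Sum>k\<le>n div 2. delannoy_term n k)"
proof -
  have factor: "[:1, 1:] * [:2, 1:] = (monom 1 2 + [:2:]) + monom (3::nat) 1"
    by (simp add: monom_altdef power2_eq_square)
  have "delannoy n =
          (\<Sum>j\<le>n. (n choose j) * coeff ((monom 1 2 + [:2:]) ^ j) j * 3 ^ (n - j))"
    unfolding delannoy_eq_coeff_power factor binomial_ring[of "monom 1 2 + [:2:]"] coeff_sum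
    by (intro sum.cong refl)
      (simp add: monom_power of_nat_poly coeff_monom_mult mult.commute[of _ "monom _ _"])
  also have "\<dots> = (\<Sum>j \<in> {j \<in> {..n}. even j}.
                      (n choose j) * (j choose (j div 2)) * 2 ^ (j - j div 2) * 3 ^ (n - j))"
    unfolding coeff_power_monom2_plus_const by (subst sum.inter_filter) (auto intro!: sum.cong)
  also have "\<dots> = (\<Sum>k\<le>n div 2. delannoy_term n k)"
    by (rule sum.reindex_bij_witness[of _ "\<lambda>k. 2 * k" "\<lambda>j. j div 2"])
      (auto simp: delannoy_term_def)
  finally show ?thesis .
qed

lemma delannoy_term_middle_even: "delannoy_term (2 * n) n = (2 * n choose n) * 2 ^ n"
  by (simp add: delannoy_term_def)

lemma delannoy_term_middle_odd:
  "delannoy_term (2 * n + 1) n = 3 * (2 * n + 1) * (2 * n choose n) * 2 ^ n"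
  using binomial_symmetric[of "2 * n" "2 * n + 1"] by (simp add: delannoy_term_def algebra_simps)

lemma delannoy_term_even_ratio:
  "delannoy_term (2 * (k + j)) k * (2 * j choose j) * 2 ^ j =
     delannoy_term (2 * (k + j)) (k + j) * ((k + j) choose k)\<^sup>2 * 9 ^ j"
proof -
  have nine: "(9::real) ^ j = 3 ^ j * 3 ^ j"
    by (simp flip: power_mult_distrib)
  have "real (delannoy_term (2 * (k + j)) k * (2 * j choose j) * 2 ^ j) =
          real (delannoy_term (2 * (k + j)) (k + j) * ((k + j) choose k)\<^sup>2 * 9 ^ j)"
    by (simp add: delannoy_term_def binomial_fact power_mult power_add power2_eq_square nine
        field_simps)
  then show ?thesis by (simp only: of_nat_eq_iff)
qed

lemma delannoy_term_odd_conv_even: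
  "(2 * j + 1) * delannoy_term (2 * (k + j) + 1) k =
     3 * (2 * (k + j) + 1) * delannoy_term (2 * (k + j)) k"
proof -
  let ?r = "(2 * k choose k) * 3 ^ (2 * j) * 2 ^ k"
  have "(2 * j + 1) * delannoy_term (2 * (k + j) + 1) k =
          ((2 * j + 1) * (2 * (k + j) + 1 choose 2 * k)) * (3 * ?r)"
    by (simp add: delannoy_term_def Suc_diff_le algebra_simps)
  also have "\<dots> = ((2 * (k + j) + 1) * (2 * (k + j) choose 2 * k)) * (3 * ?r)"
    using binomial_absorb_comp[of "2 * (k + j) + 1" "2 * k"] by simp
  also have "\<dots> = 3 * (2 * (k + j) + 1) * delannoy_term (2 * (k + j)) k"
    by (simp add: delannoy_term_def algebra_simps)
  finally show ?thesis .
qed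

lemma delannoy_term_odd_ratio:
  "delannoy_term (2 * (k + j) + 1) k * ((2 * j + 1) * (2 * j choose j)) * 2 ^ j =
     delannoy_term (2 * (k + j) + 1) (k + j) * ((k + j) choose k)\<^sup>2 * 9 ^ j"
proof -
  let ?c = "3 * (2 * (k + j) + 1)"
  have "delannoy_term (2 * (k + j) + 1) k * ((2 * j + 1) * (2 * j choose j)) * 2 ^ j =
          ?c * (delannoy_term (2 * (k + j)) k * (2 * j choose j) * 2 ^ j)"
    using delannoy_term_odd_conv_even[of j k] by (simp only: ac_simps)
  also have "\<dots> =
      ?c * (delannoy_term (2 * (k + j)) (k + j) * ((k + j) choose k)\<^sup>2 * 9 ^ j)"
    by (simp only: delannoy_term_even_ratio)
  also have "\<dots> =
      (?c * delannoy_term (2 * (k + j)) (k + j)) * ((k + j) choose k)\<^sup>2 * 9 ^ j"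
    by (simp only: ac_simps)
  also have "?c * delannoy_term (2 * (k + j)) (k + j) = delannoy_term (2 * (k + j) + 1) (k + j)"
    unfolding delannoy_term_middle_even delannoy_term_middle_odd by (simp only: ac_simps)
  finally show ?thesis .
qed

lemma v3_mult_power_two: "v3 (x * 2 ^ n) = v3 x"
proof (cases "x = 0")
  case False
  have "v3 (2 ^ n) = 0"
    by (simp add: prime_elem_multiplicity_power_distrib prime_multiplicity_other)
  with False show ?thesis
    by (simp add: prime_elem_multiplicity_mult_distrib)
qed simp

lemma v3_delannoy_eq_v3_middle_term:
  fixes c :: "nat \<Rightarrow> nat"
  assumes "r \<le> 1"
    and c_less: "\<And>j. 1 \<le> j \<Longrightarrow> c j < 9 ^ j"
    and ratio: "\<And>k j. delannoy_term (2 * (k + j) + r) k * c j * 2 ^ j =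
                  delannoy_term (2 * (k + j) + r) (k + j) * ((k + j) choose k)\<^sup>2 * 9 ^ j"
  shows "v3 (delannoy (2 * m + r)) = v3 (delannoy_term (2 * m + r) m)"
proof -
  have "(2 * m + r) div 2 = m"
    using \<open>r \<le> 1\<close> by simp
  then have "delannoy (2 * m + r) = (\<Sum>k\<le>m. delannoy_term (2 * m + r) k)"
    by (simp add: delannoy_eq_sum_delannoy_term)
  also have "v3 \<dots> = v3 (delannoy_term (2 * m + r) m)"
  proof (rule multiplicity_sum_eq_dominant)
    show middle: "delannoy_term (2 * m + r) m \<noteq> 0"
      by (simp add: delannoy_term_def)
    fix k assume "k \<in> {..m} - {m}"
    define j where "j = m - k"
    then have "1 \<le> j" and m: "m = k + j"
      using \<open>k \<in> {..m} - {m}\<close> by auto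
    have key: "delannoy_term (2 * m + r) k * (c j * 2 ^ j) =
                 delannoy_term (2 * m + r) m * ((k + j) choose k)\<^sup>2 * 3 ^ (2 * j)"
      using ratio[of k j] by (simp add: m power_mult mult.assoc)
    then have "0 < c j"
      using middle by (cases "c j = 0") simp_all
    then have "v3 (c j * 2 ^ j) < 2 * j"
      unfolding v3_mult_power_two using c_less[OF \<open>1 \<le> j\<close>]
      by (intro multiplicity_less_of_less_power) (simp_all add: power_mult)
    with middle have "v3 (delannoy_term (2 * m + r) m) < v3 (delannoy_term (2 * m + r) k)"
      by (intro prime_elem_multiplicity_less_of_mult_eq[OF _ key]) simp_all
    then show "3 ^ Suc (v3 (delannoy_term (2 * m + r) m)) dvd delannoy_term (2 * m + r) k"
      by (intro multiplicity_dvd') simp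
  qed simp_all
  finally show ?thesis .
qed

theorem theorem5:
  fixes n :: nat
  shows "v3 (delannoy (2*n+1)) = 1 + v3 (2*n+1) + v3 ((2*n) choose n) \<and>
         v3 (delannoy (2*n)) = v3 ((2*n) choose n)"
proof
  have "v3 (delannoy (2 * n + 1)) = v3 (delannoy_term (2 * n + 1) n)"
    using odd_times_central_binomial_less delannoy_term_odd_ratio
    by (rule v3_delannoy_eq_v3_middle_term[OF order.refl])
  also have "\<dots> = v3 (3 * ((2 * n + 1) * (2 * n choose n)))"
    unfolding delannoy_term_middle_odd v3_mult_power_two by (simp only: mult.assoc)
  also have "\<dots> = 1 + v3 (2 * n + 1) + v3 (2 * n choose n)"
    by (simp add: prime_elem_multiplicity_mult_distrib del: mult_Suc)
  finally show "v3 (delannoy (2*n+1)) = 1 + v3 (2*n+1) + v3 ((2*n) choose n)" .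
  have "v3 (delannoy (2 * n + 0)) = v3 (delannoy_term (2 * n + 0) n)"
    using central_binomial_less delannoy_term_even_ratio
    by (intro v3_delannoy_eq_v3_middle_term) simp_all
  then show "v3 (delannoy (2*n)) = v3 ((2*n) choose n)"
    by (simp add: delannoy_term_middle_even v3_mult_power_two)
qed


end
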